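(* Let $A$ be a double Poisson algebra and $(M,\{\!\{-,-\}\!\}_M)$ a double Poisson $A$-bimodule, and set $\{-,-\}_M=\mu_M\circ\{\!\{-,-\}\!\}_M:A\times M\to M$. Then $\{-,-\}_M$ induces well-defined maps $A_\natural\times M\to M$ and $A_\natural\times M_\natural\to M_\natural$, where $A_\natural=A/[A,A]$ and $M_\natural=M/[A,M]$.
   Context: $A$ is a unital associative $k$-algebra. A double bracket on $A$ is a bilinear map $\{\!\{-,-\}\!\}:A\times A\to A\otimes A$ with $\{\!\{a,b\}\!\}=-\{\!\{b,a\}\!\}^\circ$ (where $(u\otimes v)^\circ=v\otimes u$) and $\{\!\{a,bc\}\!\}=b\{\!\{a,c\}\!\}+\{\!\{a,b\}\!\}c$ for the outer bimodule structure $b(a_1\otimes a_2)c=ba_1\otimes a_2c$. The inner structure is $b*(a_1\otimes a_2)*c=a_1c\otimes ba_2$. Writing $\{\!\{a,b_1\otimes\cdots\otimes b_n\}\!\}_L=\{\!\{a,b_1\}\!\}\otimes b_2\otimes\cdots\otimes b_n$ and $\sigma_s$ for the permutation of tensor factors $b_1\otimes\cdots\otimes b_n\mapsto b_{s^{-1}(1)}\otimes\cdots\otimes b_{s^{-1}(n)}$, $A$ is a double Poisson algebra if $\{\!\{a,\{\!\{b,c\}\!\}\}\!\}_L+\sigma_{(123)}\{\!\{b,\{\!\{c,a\}\!\}\}\!\}_L+\sigma_{(132)}\{\!\{c,\{\!\{a,b\}\!\}\}\!\}_L=0$. For an $A$-bimodule $M$, a double Poisson bracket on $M$ is a bilinear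 $\{\!\{-,-\}\!\}_M:A\times M\to(A\otimes M)\oplus(M\otimes A)$ with (i) $\{\!\{a,bm\}\!\}_M=\{\!\{a,b\}\!\}m+b\{\!\{a,m\}\!\}_M$ and $\{\!\{a,mb\}\!\}_M=\{\!\{a,m\}\!\}_Mb+m\{\!\{a,b\}\!\}$, and (ii) $\{\!\{ab,m\}\!\}_M=a*\{\!\{b,m\}\!\}_M+\{\!\{a,m\}\!\}_M*b$ (inner actions). Put $\{\!\{m,b\}\!\}_M=-(\{\!\{b,m\}\!\}_M)^\circ$; if $\{\!\{b,m\}\!\}_M=(b_1\otimes m_1)\oplus(m_2\otimes b_2)$ set $\{\!\{a,\{\!\{b,m\}\!\}_M\}\!\}_L=(\{\!\{a,b_1\}\!\}\otimes m_1)\oplus(\{\!\{a,m_2\}\!\}_M\otimes b_2)$, and $\{\!\{m,\{\!\{a,b\}\!\}\}\!\}_L=\{\!\{m,\{\!\{a,b\}\!\}'\}\!\}_M\otimes\{\!\{a,b\}\!\}''$. $M$ is a double Poisson $A$-bimodule if moreover (iii) $\{\!\{a,\{\!\{b,m\}\!\}_M\}\!\}_L+\sigma_{(123)}\{\!\{b,\{\!\{m,a\}\!\}_M\}\!\}_L+\sigma_{(132)}\{\!\{m,\{\!\{a,b\}\!\}\}\!\}_L=0$. $\mu_M:(A\otimes M)\oplus(M\otimes A)\to M$ is the bimodule action map. *)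

theory Defs
  imports Complex_Main "HOL-Library.Poly_Mapping"
begin

text \<open>A letter is an element of A (Inl) or of M (Inr).  A formal k-linear combination
of words of letters represents an element of the direct sum of all tensor products
V1 (x) ... (x) Vn with Vi in {A, M}; two formal combinations represent the same
tensor iff their difference lies in the k-span of the multilinearity relations.\<close>

type_synonym ('k,'a,'m) tens = "('a + 'm) list \<Rightarrow>\<^sub>0 'k"

definition fsc :: "'k::comm_ring_1 \<Rightarrow> ('x \<Rightarrow>\<^sub>0 'k) \<Rightarrow> ('x \<Rightarrow>\<^sub>0 'k)" where
  "fsc c X = Poly_Mapping.map ((*) c) X"

definition lext :: "('k \<Rightarrow> 'b \<Rightarrow> 'b) \<Rightarrow> ('x \<Rightarrow> 'b::comm_monoid_add) \<Rightarrow> ('x \<Rightarrow>\<^sub>0 'k::zero) \<Rightarrow> 'b" where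
  "lext sc g X = (\<Sum>w\<in>Poly_Mapping.keys X. sc (Poly_Mapping.lookup X w) (g w))"

definition mapW :: "('x \<Rightarrow> 'y) \<Rightarrow> ('x \<Rightarrow>\<^sub>0 'k::comm_ring_1) \<Rightarrow> ('y \<Rightarrow>\<^sub>0 'k)" where
  "mapW f X = lext fsc (\<lambda>w. Poly_Mapping.single (f w) 1) X"

definition trels :: "('k \<Rightarrow> 'a \<Rightarrow> 'a) \<Rightarrow> ('k \<Rightarrow> 'm \<Rightarrow> 'm)
     \<Rightarrow> ('k::comm_ring_1, 'a::ab_group_add, 'm::ab_group_add) tens set" where
  "trels sA sM =
     {Poly_Mapping.single (us @ [Inl (a + b)] @ vs) 1 - Poly_Mapping.single (us @ [Inl a] @ vs) 1
        - Poly_Mapping.single (us @ [Inl b] @ vs) 1 | us vs a b. True}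
   \<union> {Poly_Mapping.single (us @ [Inl (sA c a)] @ vs) 1 - Poly_Mapping.single (us @ [Inl a] @ vs) c
        | us vs c a. True}
   \<union> {Poly_Mapping.single (us @ [Inr (m + n)] @ vs) 1 - Poly_Mapping.single (us @ [Inr m] @ vs) 1
        - Poly_Mapping.single (us @ [Inr n] @ vs) 1 | us vs m n. True}
   \<union> {Poly_Mapping.single (us @ [Inr (sM c m)] @ vs) 1 - Poly_Mapping.single (us @ [Inr m] @ vs) c
        | us vs c m. True}"

definition teq :: "('k \<Rightarrow> 'a \<Rightarrow> 'a) \<Rightarrow> ('k \<Rightarrow> 'm \<Rightarrow> 'm)
     \<Rightarrow> ('k::comm_ring_1, 'a::ab_group_add, 'm::ab_group_add) tens \<Rightarrow> ('k,'a,'m) tens \<Rightarrow> bool" where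
  "teq sA sM X Y \<longleftrightarrow> X - Y \<in> module.span fsc (trels sA sM)"

text \<open>Product of letters (A acting on M on both sides; M times M never occurs).\<close>
fun fmul :: "('a \<Rightarrow> 'm \<Rightarrow> 'm) \<Rightarrow> ('m \<Rightarrow> 'a \<Rightarrow> 'm) \<Rightarrow> 'a::times + 'm::zero \<Rightarrow> 'a + 'm \<Rightarrow> 'a + 'm" where
  "fmul lM rM (Inl b) (Inl a) = Inl (b * a)"
| "fmul lM rM (Inl b) (Inr m) = Inr (lM b m)"
| "fmul lM rM (Inr m) (Inl a) = Inr (rM m a)"
| "fmul lM rM (Inr m) (Inr n) = Inr 0"

text \<open>Outer bimodule structure: b (x1 (x) x2) c = b x1 (x) x2 c.\<close>
definition oL where
  "oL lM rM f X = mapW (\<lambda>w. case w of [] \<Rightarrow> [] | u # us \<Rightarrow> fmul lM rM f u # us) X"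
definition oR where
  "oR lM rM X f = mapW (\<lambda>w. if w = [] then [] else butlast w @ [fmul lM rM (last w) f]) X"

text \<open>Inner bimodule structure: b * (x1 (x) x2) * c = x1 c (x) b x2.\<close>
definition iL where
  "iL lM rM f X = mapW (\<lambda>w. case w of [u, v] \<Rightarrow> [u, fmul lM rM f v] | _ \<Rightarrow> w) X"
definition iR where
  "iR lM rM X f = mapW (\<lambda>w. case w of [u, v] \<Rightarrow> [fmul lM rM u f, v] | _ \<Rightarrow> w) X"

definition flipT where
  "flipT X = mapW (\<lambda>w. case w of [u, v] \<Rightarrow> [v, u] | _ \<Rightarrow> w) X"

text \<open>sigma_s (b1 (x) b2 (x) b3) = b_{s^-1(1)} (x) b_{s^-1(2)} (x) b_{s^-1(3)}:
  for s = (123) this is b3 (x) b1 (x) b2, for s = (132) it is b2 (x) b3 (x) b1.\<close>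
definition sig123 where
  "sig123 X = mapW (\<lambda>w. case w of [x, y, z] \<Rightarrow> [z, x, y] | _ \<Rightarrow> w) X"
definition sig132 where
  "sig132 X = mapW (\<lambda>w. case w of [x, y, z] \<Rightarrow> [y, z, x] | _ \<Rightarrow> w) X"

text \<open>The brackets on letters: {{a,b}}, {{a,m}}_M, and {{m,b}}_M = -({{b,m}}_M)^o.\<close>
fun dbr :: "('a \<Rightarrow> 'a \<Rightarrow> ('k::comm_ring_1,'a,'m) tens) \<Rightarrow> ('a \<Rightarrow> 'm \<Rightarrow> ('k,'a,'m) tens)
             \<Rightarrow> 'a + 'm \<Rightarrow> 'a + 'm \<Rightarrow> ('k,'a,'m) tens" where
  "dbr dA dM (Inl a) (Inl b) = dA a b"
| "dbr dA dM (Inl a) (Inr m) = dM a m"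
| "dbr dA dM (Inr m) (Inl b) = - flipT (dM b m)"
| "dbr dA dM (Inr m) (Inr n) = 0"

text \<open>{{x, b1 (x) ... (x) bn}}_L = {{x,b1}} (x) b2 (x) ... (x) bn, extended linearly.\<close>
definition brL where
  "brL dA dM f X = lext fsc
     (\<lambda>w. case w of [] \<Rightarrow> 0 | u # us \<Rightarrow> mapW (\<lambda>v. v @ us) (dbr dA dM f u)) X"

fun muW :: "('a \<Rightarrow> 'm \<Rightarrow> 'm) \<Rightarrow> ('m \<Rightarrow> 'a \<Rightarrow> 'm) \<Rightarrow> ('a + 'm) list \<Rightarrow> 'm::zero" where
  "muW lM rM [Inl a, Inr m] = lM a m"
| "muW lM rM [Inr m, Inl a] = rM m a"
| "muW lM rM _ = 0"

definition muM where
  "muM sM lM rM X = lext sM (muW lM rM) X"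

definition kalg :: "('k::field \<Rightarrow> 'a::ring_1 \<Rightarrow> 'a) \<Rightarrow> bool" where
  "kalg sA \<longleftrightarrow> module sA \<and> (\<forall>c x y. sA c (x * y) = sA c x * y \<and> sA c (x * y) = x * sA c y)"

definition bimod :: "('k::field \<Rightarrow> 'a::ring_1 \<Rightarrow> 'a) \<Rightarrow> ('k \<Rightarrow> 'm::ab_group_add \<Rightarrow> 'm)
    \<Rightarrow> ('a \<Rightarrow> 'm \<Rightarrow> 'm) \<Rightarrow> ('m \<Rightarrow> 'a \<Rightarrow> 'm) \<Rightarrow> bool" where
  "bimod sA sM lM rM \<longleftrightarrow> module sM \<and>
    (\<forall>m. lM 1 m = m \<and> rM m 1 = m) \<and>
    (\<forall>a b m. lM (a * b) m = lM a (lM b m) \<and> rM m (a * b) = rM (rM m a) b) \<and>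
    (\<forall>a b m. lM (a + b) m = lM a m + lM b m \<and> rM m (a + b) = rM m a + rM m b) \<and>
    (\<forall>a m n. lM a (m + n) = lM a m + lM a n \<and> rM (m + n) a = rM m a + rM n a) \<and>
    (\<forall>a b m. lM a (rM m b) = rM (lM a m) b) \<and>
    (\<forall>c a m. sM c (lM a m) = lM (sA c a) m \<and> sM c (lM a m) = lM a (sM c m) \<and>
             sM c (rM m a) = rM (sM c m) a \<and> sM c (rM m a) = rM m (sA c a))"

definition double_poisson_alg where
  "double_poisson_alg sA sM lM rM dA \<longleftrightarrow>
    (\<forall>a b. Poly_Mapping.keys (dA a b) \<subseteq> {[Inl x, Inl y] | x y. True}) \<and>
    (\<forall>a a' b. teq sA sM (dA (a + a') b) (dA a b + dA a' b)) \<and>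
    (\<forall>a b b'. teq sA sM (dA a (b + b')) (dA a b + dA a b')) \<and>
    (\<forall>c a b. teq sA sM (dA (sA c a) b) (fsc c (dA a b))) \<and>
    (\<forall>c a b. teq sA sM (dA a (sA c b)) (fsc c (dA a b))) \<and>
    (\<forall>a b. teq sA sM (dA a b) (- flipT (dA b a))) \<and>
    (\<forall>a b c. teq sA sM (dA a (b * c))
        (oL lM rM (Inl b) (dA a c) + oR lM rM (dA a b) (Inl c))) \<and>
    (\<forall>a b c. teq sA sM
        (brL dA (\<lambda>_ _. 0) (Inl a) (dA b c) + sig123 (brL dA (\<lambda>_ _. 0) (Inl b) (dA c a))
          + sig132 (brL dA (\<lambda>_ _. 0) (Inl c) (dA a b))) 0)"

definition double_poisson_bimod where
  "double_poisson_bimod sA sM lM rM dA dM \<longleftrightarrow>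
    (\<forall>a m. Poly_Mapping.keys (dM a m) \<subseteq> {[Inl x, Inr n] | x n. True} \<union> {[Inr n, Inl x] | x n. True}) \<and>
    (\<forall>a a' m. teq sA sM (dM (a + a') m) (dM a m + dM a' m)) \<and>
    (\<forall>a m m'. teq sA sM (dM a (m + m')) (dM a m + dM a m')) \<and>
    (\<forall>c a m. teq sA sM (dM (sA c a) m) (fsc c (dM a m))) \<and>
    (\<forall>c a m. teq sA sM (dM a (sM c m)) (fsc c (dM a m))) \<and>
    (\<forall>a b m. teq sA sM (dM a (lM b m))
        (oR lM rM (dA a b) (Inr m) + oL lM rM (Inl b) (dM a m))) \<and>
    (\<forall>a b m. teq sA sM (dM a (rM m b))
        (oR lM rM (dM a m) (Inl b) + oL lM rM (Inr m) (dA a b))) \<and>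
    (\<forall>a b m. teq sA sM (dM (a * b) m)
        (iL lM rM (Inl a) (dM b m) + iR lM rM (dM a m) (Inl b))) \<and>
    (\<forall>a b m. teq sA sM
        (brL dA dM (Inl a) (dM b m) + sig123 (brL dA dM (Inl b) (dbr dA dM (Inr m) (Inl a)))
          + sig132 (brL dA dM (Inr m) (dA a b))) 0)"

definition commA :: "('k::field \<Rightarrow> 'a::ring_1 \<Rightarrow> 'a) \<Rightarrow> 'a set" where
  "commA sA = module.span sA {x * y - y * x | x y. True}"

definition commM :: "('k::field \<Rightarrow> 'm::ab_group_add \<Rightarrow> 'm) \<Rightarrow> ('a \<Rightarrow> 'm \<Rightarrow> 'm) \<Rightarrow> ('m \<Rightarrow> 'a \<Rightarrow> 'm) \<Rightarrow> 'm set" where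
  "commM sM lM rM = module.span sM {lM a m - rM m a | a m. True}"

end

theory Submission
  imports Defs
begin

text \<open>Write \<open>{a, m}\<close> for \<open>\<mu>\<^sub>M {{a, m}}\<^sub>M\<close>.  After applying \<open>\<mu>\<^sub>M\<close>, the inner left and inner
  right actions of an element of \<open>A\<close> coincide, so the inner Leibniz rule makes \<open>{x y, m}\<close>
  symmetric in \<open>x, y\<close>; hence the bracket vanishes on \<open>[A,A]\<close>.  The outer Leibniz rules
  write \<open>{a, b n - n b}\<close> as a sum of terms \<open>x (y n) - (n x) y\<close> and \<open>b p - p b\<close>, all in
  \<open>[A,M]\<close>; by linearity \<open>{a, [A,M]} \<subseteq> [A,M]\<close>.  The bimodule axioms make \<open>\<mu>\<^sub>M\<close> kill the
  multilinearity relations, so all identities between tensors survive \<open>\<mu>\<^sub>M\<close>.\<close>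

lemma lext_superset:
  assumes "module s" "finite S" "Poly_Mapping.keys X \<subseteq> S"
  shows "lext s g X = (\<Sum>w\<in>S. s (Poly_Mapping.lookup X w) (g w))"
  unfolding lext_def
  by (rule sum.mono_neutral_left) (use assms module.scale_zero_left in \<open>auto simp: in_keys_iff\<close>)

lemma lext_zero: "lext s g 0 = 0"
  by (simp add: lext_def)

lemma lext_add:
  assumes "module s"
  shows "lext s g (X + Y) = lext s g X + lext s g Y"
proof -
  let ?S = "Poly_Mapping.keys X \<union> Poly_Mapping.keys Y"
  have "lext s g (X + Y) = (\<Sum>w\<in>?S. s (Poly_Mapping.lookup (X + Y) w) (g w))"
    by (rule lext_superset[OF assms]) (simp_all add: keys_add)
  also have "\<dots> = (\<Sum>w\<in>?S. s (Poly_Mapping.lookup X w) (g w)) + (\<Sum>w\<in>?S. s (Poly_Mapping.lookup Y w) (g w))"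
    by (simp add: lookup_add module.scale_left_distrib[OF assms] sum.distrib)
  also have "\<dots> = lext s g X + lext s g Y"
    using lext_superset[OF assms, of ?S X g] lext_superset[OF assms, of ?S Y g] by simp
  finally show ?thesis .
qed

lemma lext_diff:
  assumes "module s"
  shows "lext s g (X - Y) = lext s g X - lext s g Y"
  using lext_add[OF assms, of g "X - Y" Y] by (simp add: eq_diff_eq)

lemma lookup_fsc: "Poly_Mapping.lookup (fsc c X) w = c * Poly_Mapping.lookup X w"
  unfolding fsc_def by (simp add: map.rep_eq when_def)

lemma keys_fsc_subset: "Poly_Mapping.keys (fsc c X) \<subseteq> Poly_Mapping.keys X"
  by (auto simp: in_keys_iff lookup_fsc)

lemma module_fsc: "module (fsc :: 'k::comm_ring_1 \<Rightarrow> ('x \<Rightarrow>\<^sub>0 'k) \<Rightarrow> _)"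
  by unfold_locales (auto intro!: poly_mapping_eqI simp: lookup_fsc lookup_add algebra_simps)

lemma lext_fsc:
  assumes "module s"
  shows "lext s g (fsc c X) = s c (lext s g X)"
proof -
  have "lext s g (fsc c X) = (\<Sum>w\<in>Poly_Mapping.keys X. s (Poly_Mapping.lookup (fsc c X) w) (g w))"
    by (rule lext_superset[OF assms _ keys_fsc_subset]) simp
  also have "\<dots> = s c (lext s g X)"
    by (simp add: lookup_fsc lext_def module.scale_sum_right[OF assms] module.scale_scale[OF assms])
  finally show ?thesis .
qed

lemma lext_single:
  assumes "module s"
  shows "lext s g (Poly_Mapping.single w c) = s c (g w)"
  by (subst lext_superset[OF assms, of "{w}"]) auto

lemma lext_sum:
  assumes "module s"
  shows "lext s g (sum f I) = (\<Sum>i\<in>I. lext s g (f i))"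
  by (induction I rule: infinite_finite_induct) (auto simp: lext_zero lext_add[OF assms])

lemma lext_cong:
  "(\<And>w. w \<in> Poly_Mapping.keys X \<Longrightarrow> g w = h w) \<Longrightarrow> lext s g X = lext s h X"
  unfolding lext_def by (rule sum.cong) auto

lemma lext_diff_fun:
  assumes "module s"
  shows "lext s g X - lext s h X = lext s (\<lambda>w. g w - h w) X"
  unfolding lext_def by (simp add: sum_subtractf module.scale_right_diff_distrib[OF assms])

lemma lext_in_subspace:
  assumes "module s" "module.subspace s S" "\<And>w. w \<in> Poly_Mapping.keys X \<Longrightarrow> g w \<in> S"
  shows "lext s g X \<in> S"
  unfolding lext_def
  by (rule module.subspace_sum[OF assms(1,2)])
     (auto intro: module.subspace_scale[OF assms(1,2)] assms(3))

lemma muM_add: "module sM \<Longrightarrow> muM sM lM rM (X + Y) = muM sM lM rM X + muM sM lM rM Y"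
  by (simp add: muM_def lext_add)

lemma muM_diff: "module sM \<Longrightarrow> muM sM lM rM (X - Y) = muM sM lM rM X - muM sM lM rM Y"
  by (simp add: muM_def lext_diff)

lemma muM_fsc: "module sM \<Longrightarrow> muM sM lM rM (fsc c X) = sM c (muM sM lM rM X)"
  by (simp add: muM_def lext_fsc)

lemma muM_mapW:
  assumes "module sM"
  shows "muM sM lM rM (mapW f X) = lext sM (\<lambda>w. muW lM rM (f w)) X"
proof -
  have "mapW f X = (\<Sum>w\<in>Poly_Mapping.keys X. fsc (Poly_Mapping.lookup X w) (Poly_Mapping.single (f w) 1))"
    by (simp add: mapW_def lext_def)
  then show ?thesis
    by (simp add: muM_def lext_sum[OF assms] lext_fsc[OF assms] lext_single[OF assms]
        module.scale_one[OF assms]) (simp add: lext_def)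
qed

lemma muW_length_neq_2: "length w \<noteq> 2 \<Longrightarrow> muW lM rM w = 0"
  by (cases "(lM, rM, w)" rule: muW.cases) auto

lemma muW_append_Cons: "muW lM rM (us @ x # vs) =
  (if us = [] \<and> length vs = 1 then muW lM rM [x, hd vs]
   else if vs = [] \<and> length us = 1 then muW lM rM [hd us, x] else 0)"
  by (cases us; cases vs) (auto simp: muW_length_neq_2)

lemma bimodD:
  assumes "bimod sA sM lM rM"
  shows "module sM" "lM (a + b) m = lM a m + lM b m" "rM m (a + b) = rM m a + rM m b"
    "lM a (m + n) = lM a m + lM a n" "rM (m + n) a = rM m a + rM n a"
    "lM (a * b) m = lM a (lM b m)" "rM m (a * b) = rM (rM m a) b"
    "lM a (rM m b) = rM (lM a m) b"
    "sM c (lM a m) = lM (sA c a) m" "lM a (sM c m) = lM (sA c a) m"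
    "rM (sM c m) a = rM m (sA c a)" "sM c (rM m a) = rM m (sA c a)"
  using assms unfolding bimod_def by metis+

lemma muW_multilinear:
  assumes b: "bimod sA sM lM rM"
  shows "muW lM rM (us @ Inl (a + a') # vs) = muW lM rM (us @ Inl a # vs) + muW lM rM (us @ Inl a' # vs)"
    and "muW lM rM (us @ Inr (m + m') # vs) = muW lM rM (us @ Inr m # vs) + muW lM rM (us @ Inr m' # vs)"
    and "muW lM rM (us @ Inl (sA c a) # vs) = sM c (muW lM rM (us @ Inl a # vs))"
    and "muW lM rM (us @ Inr (sM c m) # vs) = sM c (muW lM rM (us @ Inr m # vs))"
  by (simp_all add: muW_append_Cons module.scale_zero_right[OF bimodD(1)[OF b]];
      cases "hd vs"; cases "hd us"; simp add: bimodD[OF b])+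

lemma muM_trels:
  assumes b: "bimod sA sM lM rM" and r: "r \<in> trels sA sM"
  shows "muM sM lM rM r = 0"
  using r unfolding trels_def muM_def
  by (elim UnE CollectE exE conjE)
     (simp_all add: lext_diff[OF bimodD(1)[OF b]] lext_single[OF bimodD(1)[OF b]]
       module.scale_one[OF bimodD(1)[OF b]] muW_multilinear[OF b])

lemma muM_teq:
  assumes b: "bimod sA sM lM rM" and "teq sA sM X Y"
  shows "muM sM lM rM X = muM sM lM rM Y"
proof -
  note m = bimodD(1)[OF b]
  have "X - Y \<in> module.span fsc (trels sA sM)"
    using assms(2) by (simp add: teq_def)
  then have "muM sM lM rM (X - Y) = 0"
    by (rule module.span_induct_alt[OF module_fsc, where h="\<lambda>Z. muM sM lM rM Z = 0"])
       (simp_all add: muM_def lext_zero lext_add[OF m] lext_fsc[OF m]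
         muM_trels[OF b, unfolded muM_def] module.scale_zero_right[OF m])
  then show ?thesis
    by (simp add: muM_diff[OF m])
qed

lemma muM_iL_eq_iR:
  assumes b: "bimod sA sM lM rM"
    and keys: "Poly_Mapping.keys T \<subseteq> {[Inl x, Inr n] | x n. True} \<union> {[Inr n, Inl x] | x n. True}"
  shows "muM sM lM rM (iL lM rM (Inl a) T) = muM sM lM rM (iR lM rM T (Inl a))"
  unfolding iL_def iR_def muM_mapW[OF bimodD(1)[OF b]]
  by (rule lext_cong) (use keys in \<open>auto simp: bimodD[OF b]\<close>)

lemma commM_subspace: "module sM \<Longrightarrow> module.subspace sM (commM sM lM rM)"
  unfolding commM_def by (rule module.subspace_span)

lemma commutator_in_commM: "module sM \<Longrightarrow> lM a m - rM m a \<in> commM sM lM rM"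
  unfolding commM_def by (rule module.span_base) auto

lemma muM_oR_minus_oL_in_commM:
  assumes b: "bimod sA sM lM rM"
    and keys: "Poly_Mapping.keys T \<subseteq> {[Inl x, Inl y] | x y. True}"
  shows "muM sM lM rM (oR lM rM T (Inr n)) - muM sM lM rM (oL lM rM (Inr n) T) \<in> commM sM lM rM"
  unfolding oR_def oL_def muM_mapW[OF bimodD(1)[OF b]] lext_diff_fun[OF bimodD(1)[OF b]]
proof (rule lext_in_subspace[OF bimodD(1)[OF b] commM_subspace[OF bimodD(1)[OF b]]])
  fix w assume "w \<in> Poly_Mapping.keys T"
  then obtain x y where w: "w = [Inl x, Inl y]"
    using keys by blast
  have "lM x (lM y n) - rM (rM n x) y
      = (lM x (lM y n) - rM (lM y n) x) + (lM y (rM n x) - rM (rM n x) y)"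
    by (simp add: bimodD[OF b])
  also have "\<dots> \<in> commM sM lM rM"
    by (intro module.subspace_add[OF bimodD(1)[OF b] commM_subspace] commutator_in_commM bimodD(1)[OF b])
  finally show "muW lM rM (if w = [] then [] else butlast w @ [fmul lM rM (last w) (Inr n)])
      - muW lM rM (case w of [] \<Rightarrow> [] | u # us \<Rightarrow> fmul lM rM (Inr n) u # us) \<in> commM sM lM rM"
    using w by simp
qed

lemma muM_oL_minus_oR_in_commM:
  assumes b: "bimod sA sM lM rM"
    and keys: "Poly_Mapping.keys T \<subseteq> {[Inl x, Inr n] | x n. True} \<union> {[Inr n, Inl x] | x n. True}"
  shows "muM sM lM rM (oL lM rM (Inl c) T) - muM sM lM rM (oR lM rM T (Inl c)) \<in> commM sM lM rM"
  unfolding oR_def oL_def muM_mapW[OF bimodD(1)[OF b]] lext_diff_fun[OF bimodD(1)[OF b]]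
proof (rule lext_in_subspace[OF bimodD(1)[OF b] commM_subspace[OF bimodD(1)[OF b]]])
  fix w assume "w \<in> Poly_Mapping.keys T"
  then consider x p where "w = [Inl x, Inr p]" | x p where "w = [Inr p, Inl x]"
    using keys by blast
  then show "muW lM rM (case w of [] \<Rightarrow> [] | u # us \<Rightarrow> fmul lM rM (Inl c) u # us)
      - muW lM rM (if w = [] then [] else butlast w @ [fmul lM rM (last w) (Inl c)]) \<in> commM sM lM rM"
  proof cases
    case (1 x p)
    then show ?thesis
      using commutator_in_commM[OF bimodD(1)[OF b], of lM c "lM x p" rM] by (simp add: bimodD[OF b])
  next
    case (2 x p)
    then show ?thesis
      using commutator_in_commM[OF bimodD(1)[OF b], of lM c "rM p x" rM] by (simp add: bimodD[OF b])
  qed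
qed

locale double_poisson_bimodule =
  fixes sA :: "'k::field \<Rightarrow> 'a::ring_1 \<Rightarrow> 'a"
    and sM :: "'k \<Rightarrow> 'm::ab_group_add \<Rightarrow> 'm"
    and lM :: "'a \<Rightarrow> 'm \<Rightarrow> 'm" and rM :: "'m \<Rightarrow> 'a \<Rightarrow> 'm"
    and dA :: "'a \<Rightarrow> 'a \<Rightarrow> ('k, 'a, 'm) tens"
    and dM :: "'a \<Rightarrow> 'm \<Rightarrow> ('k, 'a, 'm) tens"
  assumes algebra: "kalg sA"
    and bimodule: "bimod sA sM lM rM"
    and double_poisson_algebra: "double_poisson_alg sA sM lM rM dA"
    and double_poisson_bimodule: "double_poisson_bimod sA sM lM rM dA dM"
begin

abbreviation bracket :: "'a \<Rightarrow> 'm \<Rightarrow> 'm" where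
  "bracket a m \<equiv> muM sM lM rM (dM a m)"

lemma module_A: "module sA"
  using algebra by (simp add: kalg_def)

lemma module_M: "module sM"
  using bimodD(1)[OF bimodule] .

lemma keys_dA: "Poly_Mapping.keys (dA a b) \<subseteq> {[Inl x, Inl y] | x y. True}"
  using double_poisson_algebra by (simp add: double_poisson_alg_def)

lemma keys_dM: "Poly_Mapping.keys (dM a m) \<subseteq> {[Inl x, Inr n] | x n. True} \<union> {[Inr n, Inl x] | x n. True}"
  using double_poisson_bimodule by (simp add: double_poisson_bimod_def)

lemma bracket_add_left: "bracket (a + a') m = bracket a m + bracket a' m"
  using double_poisson_bimodule muM_teq[OF bimodule] muM_add[OF module_M]
  unfolding double_poisson_bimod_def by metis

lemma bracket_scale_left: "bracket (sA c a) m = sM c (bracket a m)"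
  using double_poisson_bimodule muM_teq[OF bimodule] muM_fsc[OF module_M]
  unfolding double_poisson_bimod_def by metis

lemma bracket_mult_left:
  "bracket (a * a') m = muM sM lM rM (iL lM rM (Inl a) (dM a' m)) + muM sM lM rM (iR lM rM (dM a m) (Inl a'))"
  using double_poisson_bimodule muM_teq[OF bimodule] muM_add[OF module_M]
  unfolding double_poisson_bimod_def by metis

lemma bracket_add_right: "bracket a (m + m') = bracket a m + bracket a m'"
  using double_poisson_bimodule muM_teq[OF bimodule] muM_add[OF module_M]
  unfolding double_poisson_bimod_def by metis

lemma bracket_scale_right: "bracket a (sM c m) = sM c (bracket a m)"
  using double_poisson_bimodule muM_teq[OF bimodule] muM_fsc[OF module_M]
  unfolding double_poisson_bimod_def by metis

lemma bracket_lM_right: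
  "bracket a (lM b m) = muM sM lM rM (oR lM rM (dA a b) (Inr m)) + muM sM lM rM (oL lM rM (Inl b) (dM a m))"
  using double_poisson_bimodule muM_teq[OF bimodule] muM_add[OF module_M]
  unfolding double_poisson_bimod_def by metis

lemma bracket_rM_right:
  "bracket a (rM m b) = muM sM lM rM (oR lM rM (dM a m) (Inl b)) + muM sM lM rM (oL lM rM (Inr m) (dA a b))"
  using double_poisson_bimodule muM_teq[OF bimodule] muM_add[OF module_M]
  unfolding double_poisson_bimod_def by metis

lemma bracket_diff_left: "bracket (a - a') m = bracket a m - bracket a' m"
  using bracket_add_left[of "a - a'" a' m] by (simp add: eq_diff_eq)

lemma bracket_diff_right: "bracket a (m - m') = bracket a m - bracket a m'"
  using bracket_add_right[of a "m - m'" m'] by (simp add: eq_diff_eq)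

lemma bracket_mult_commute: "bracket (x * y) m = bracket (y * x) m"
  using bracket_mult_left[of x y m] bracket_mult_left[of y x m]
    muM_iL_eq_iR[OF bimodule keys_dM, of x y m] muM_iL_eq_iR[OF bimodule keys_dM, of y x m]
  by (simp add: add.commute)

lemma bracket_commA_left: "a \<in> commA sA \<Longrightarrow> bracket a m = 0"
  unfolding commA_def
  by (rule module.span_induct_alt[OF module_A, where h="\<lambda>a. bracket a m = 0"])
     (auto simp: bracket_diff_left[of 0 0, simplified] bracket_add_left bracket_scale_left
       bracket_diff_left bracket_mult_commute module.scale_zero_right[OF module_M])

lemma bracket_commutator_right: "bracket a (lM b n - rM n b) \<in> commM sM lM rM"
proof -
  have "bracket a (lM b n - rM n b)
      = (muM sM lM rM (oR lM rM (dA a b) (Inr n)) - muM sM lM rM (oL lM rM (Inr n) (dA a b)))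
        + (muM sM lM rM (oL lM rM (Inl b) (dM a n)) - muM sM lM rM (oR lM rM (dM a n) (Inl b)))"
    by (simp add: bracket_diff_right bracket_lM_right bracket_rM_right)
  also have "\<dots> \<in> commM sM lM rM"
    by (intro module.subspace_add[OF module_M commM_subspace[OF module_M]]
        muM_oR_minus_oL_in_commM[OF bimodule keys_dA] muM_oL_minus_oR_in_commM[OF bimodule keys_dM])
  finally show ?thesis .
qed

lemma bracket_commM_right:
  assumes "m \<in> commM sM lM rM"
  shows "bracket a m \<in> commM sM lM rM"
  using assms[unfolded commM_def]
  by (rule module.span_induct_alt[OF module_M, where h="\<lambda>m. bracket a m \<in> commM sM lM rM"])
     (auto simp: bracket_diff_right[of a 0 0, simplified] bracket_add_right bracket_scale_right
       intro!: module.subspace_add[OF module_M commM_subspace[OF module_M]]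
         module.subspace_scale[OF module_M commM_subspace[OF module_M]]
         module.subspace_0[OF module_M commM_subspace[OF module_M]]
         bracket_commutator_right)

end

theorem proposition3p9:
  fixes sA :: "'k::field \<Rightarrow> 'a::ring_1 \<Rightarrow> 'a"
    and sM :: "'k \<Rightarrow> 'm::ab_group_add \<Rightarrow> 'm"
    and lM :: "'a \<Rightarrow> 'm \<Rightarrow> 'm" and rM :: "'m \<Rightarrow> 'a \<Rightarrow> 'm"
    and dA :: "'a \<Rightarrow> 'a \<Rightarrow> ('k, 'a, 'm) tens"
    and dM :: "'a \<Rightarrow> 'm \<Rightarrow> ('k, 'a, 'm) tens"
  assumes "kalg sA"
    and "bimod sA sM lM rM"
    and "double_poisson_alg sA sM lM rM dA"
    and "double_poisson_bimod sA sM lM rM dA dM"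
  shows "(\<forall>a a' m. a - a' \<in> commA sA \<longrightarrow> muM sM lM rM (dM a m) = muM sM lM rM (dM a' m))
       \<and> (\<forall>a a' m m'. a - a' \<in> commA sA \<longrightarrow> m - m' \<in> commM sM lM rM \<longrightarrow>
            muM sM lM rM (dM a m) - muM sM lM rM (dM a' m') \<in> commM sM lM rM)"
proof -
  interpret double_poisson_bimodule sA sM lM rM dA dM
    using assms by unfold_locales
  have left: "bracket a m = bracket a' m" if "a - a' \<in> commA sA" for a a' m
    using bracket_diff_left[of a a' m] bracket_commA_left[OF that] by simp
  have "bracket a m - bracket a' m' = bracket a' (m - m')" if "a - a' \<in> commA sA" for a a' m m'
    using left[OF that] bracket_diff_right by simp
  then show ?thesis
    using left bracket_commM_right by auto
qed

end
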